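(* Let $\sigma$ be a signature and $\mathcal F\in\mathbb F_\sigma$. (i) If $S,T$ are generalized causal teams over $\sigma$ with $T$ uniform and $T=T^{\mathcal F}$, then $S\models^g\Theta^{T^-}\wedge\Phi^{\mathcal F}$ iff $S\preccurlyeq T$. (ii) For any causal teams $S=(S^-,\mathcal G)$ and $T=(T^-,\mathcal F)$ over $\sigma$: $S\models^c\Theta^{T^-}\wedge\Phi^{\mathcal F}$ iff $S\preccurlyeq T$.
   Context: A signature $\sigma=(\mathrm{Dom},\mathrm{Ran})$: $\mathrm{Dom}$ nonempty finite set of variables, each with nonempty finite range $\mathrm{Ran}(X)$; $\mathbf X=\mathbf x$ abbreviates $X_1=x_1\wedge\dots\wedge X_n=x_n$ ($\mathbf x\in\prod\mathrm{Ran}(X_i)$), inconsistent if it contains $X=x,X=x'$ with $x\ne x'$. $\mathcal{CO}[\sigma]$: $\alpha::=X=x\mid\neg\alpha\mid\alpha\wedge\alpha\mid\alpha\vee\alpha\mid\mathbf X=\mathbf x\;\Box\!\!\rightarrow\alpha$; $\alpha\supset\beta$ abbreviates $\neg\alpha\vee\beta$; $\bot$ abbreviates $X=x\wedge\neg(X=x)$. Systems of functions $\mathcal F$: for each $V\in\mathrm{En}(\mathcal F)\subseteq\mathrm{Dom}$ parents $PA^{\mathcal F}_V\subseteq\mathrm{Dom}\setminus\{V\}$ and $\mathcal F_V:\mathrm{Ran}(PA^{\mathcal F}_V)\to\mathrm{Ran}(V)$; $\mathrm{Ex}(\mathcal F)=\mathrm{Dom}\setminus\mathrm{En}(\mathcal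 F)$; only recursive (acyclic parent graph), forming $\mathbb F_\sigma$. Assignments $s$ ($s(X)\in\mathrm{Ran}(X)$) form $\mathbb A_\sigma$; $s$ is compatible with $\mathcal F$ if $s(V)=\mathcal F_V(s(PA^{\mathcal F}_V))$ for $V\in\mathrm{En}(\mathcal F)$. For consistent $\mathbf X=\mathbf x$: $\mathcal F_{\mathbf X=\mathbf x}$ restricts $\mathcal F$ to $\mathrm{En}(\mathcal F)\setminus\mathbf X$; $s^{\mathcal F}_{\mathbf X=\mathbf x}$: $X_i\mapsto x_i$, $V\mapsto s(V)$ on $\mathrm{Ex}(\mathcal F)\setminus\mathbf X$, $V\mapsto\mathcal F_V(s^{\mathcal F}_{\mathbf X=\mathbf x}(PA^{\mathcal F}_V))$ on $\mathrm{En}(\mathcal F)\setminus\mathbf X$. Causal team $T=(T^-,\mathcal F)$ ($T^-$ a set of compatible assignments; all teams with empty team component identified as $\emptyset$); causal subteams $(S^-,\mathcal F)$, $S^-\subseteq T^-$ (and $\emptyset$); $T_{\mathbf X=\mathbf x}=(\{s^{\mathcal F}_{\mathbf X=\mathbf x}:s\in T^-\},\mathcal F_{\mathbf X=\mathbf x})$. $\models^c$: $T\models X=x$ iff $s(X)=x$ for all $s\in T^-$; $T\models\neg\alpha$ iff $(\{s\},\mathcal F)\not\models\alpha$ for all $s\in T^-$; $\wedge$ classical; $T\models\alpha\vee\beta$ iff causal subteams $T_1,T_2$ exist with $T_1^-\cup T_2^-=T^-$, $T_1\models\alpha$, $T_2\models\beta$; $T\models\mathbf X=\mathbf x\;\Box\!\!\rightarrow\alpha$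 iff $\mathbf X=\mathbf x$ inconsistent or $T_{\mathbf X=\mathbf x}\models\alpha$. Generalized causal team: a set $T$ of compatible pairs $(s,\mathcal F)$, $\mathcal F\in\mathbb F_\sigma$; subteams are subsets; $T^-=\{s:(s,\mathcal F)\in T\}$; $T_{\mathbf X=\mathbf x}=\{(s^{\mathcal F}_{\mathbf X=\mathbf x},\mathcal F_{\mathbf X=\mathbf x}):(s,\mathcal F)\in T\}$; $\models^g$: same clauses except $T\models\neg\alpha$ iff $\{(s,\mathcal F)\}\not\models\alpha$ for all $(s,\mathcal F)\in T$, and $T\models\alpha\vee\beta$ iff $T=T_1\cup T_2$ with $T_1\models\alpha$, $T_2\models\beta$. $\mathrm{Cn}(\mathcal F)=\{V\in\mathrm{En}(\mathcal F):\mathcal F_V\text{ constant}\}$; $\mathcal F_V\sim\mathcal G_V$ iff $\mathcal F_V(\mathbf x\mathbf y)=\mathcal G_V(\mathbf x\mathbf z)$ for all $\mathbf x\in\mathrm{Ran}(PA^{\mathcal F}_V\cap PA^{\mathcal G}_V)$, $\mathbf y\in\mathrm{Ran}(PA^{\mathcal F}_V\setminus PA^{\mathcal G}_V)$, $\mathbf z\in\mathrm{Ran}(PA^{\mathcal G}_V\setminus PA^{\mathcal F}_V)$; $\mathcal F\sim\mathcal G$ iff $\mathrm{En}(\mathcal F)\setminus\mathrm{Cn}(\mathcal F)=\mathrm{En}(\mathcal G)\setminus\mathrm{Cn}(\mathcal G)$ and $\mathcal F_V\sim\mathcal G_V$ for each such $V$. Nonempty causal teams: $(T^-,\mathcal F)\approx(S^-,\mathcal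 G)$ iff $T^-=S^-$ and $\mathcal F\sim\mathcal G$. Generalized: $T^{\mathcal F}=\{(s,\mathcal G)\in T:\mathcal G\sim\mathcal F\}$; $S\approx T$ iff $(S^{\mathcal F})^-=(T^{\mathcal F})^-$ for all $\mathcal F$; $T$ uniform iff $\mathcal F\sim\mathcal G$ for all $(s,\mathcal F),(t,\mathcal G)\in T$. $S\preccurlyeq T$ iff $S\approx R$ for some causal subteam $R$ of $T$; also $\emptyset\preccurlyeq T$ for every $T$. $\Theta^{T^-}:=\bigvee_{s\in T^-}\bigwedge_{V\in\mathrm{Dom}}V=s(V)$ (equal to $\bot$ if $T^-=\emptyset$). With $\mathbf W_V$ listing $\mathrm{Dom}\setminus\{V\}$: $\Phi^{\mathcal F}:=\bigwedge_{V\in\mathrm{En}(\mathcal F)\setminus\mathrm{Cn}(\mathcal F)}\eta(V)\wedge\bigwedge_{V\notin\mathrm{En}(\mathcal F)\setminus\mathrm{Cn}(\mathcal F)}\xi(V)$, where $\eta(V)$ is the conjunction of all $(\mathbf W=\mathbf w\wedge PA^{\mathcal F}_V=\mathbf p)\;\Box\!\!\rightarrow V=\mathcal F_V(\mathbf p)$ ($\mathbf W$ listing $\mathrm{Dom}\setminus(PA^{\mathcal F}_V\cup\{V\})$, $\mathbf w\in\mathrm{Ran}(\mathbf W)$, $\mathbf p\in\mathrm{Ran}(PA^{\mathcal F}_V)$) and $\xi(V)$ is the conjunction of all $V=v\supset(\mathbf W_V=\mathbf w\;\Box\!\!\rightarrow V=v)$ ($v\in\mathrm{Ran}(V)$, $\mathbf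 w\in\mathrm{Ran}(\mathbf W_V)$). *)

theory Defs
  imports "HOL-Library.FuncSet"
begin

definition wf_sig :: "'v set \<Rightarrow> ('v \<Rightarrow> 'a set) \<Rightarrow> bool" where
  "wf_sig Dom Ran \<longleftrightarrow> finite Dom \<and> Dom \<noteq> {} \<and> (\<forall>X\<in>Dom. finite (Ran X) \<and> Ran X \<noteq> {})"

text \<open>Assignments are the elements of PiE Dom Ran (extensional outside Dom).\<close>

record ('v, 'a) sys =
  En :: "'v set"
  PA :: "'v \<Rightarrow> 'v set"
  Fn :: "'v \<Rightarrow> ('v \<Rightarrow> 'a) \<Rightarrow> 'a"

text \<open>A (recursive) system of functions; the function of V is applied to assignments
  of its parents (elements of PiE (PA V) Ran). Representation is made canonical.\<close>

definition wf_sys :: "'v set \<Rightarrow> ('v \<Rightarrow> 'a set) \<Rightarrow> ('v, 'a) sys \<Rightarrow> bool" where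
  "wf_sys Dom Ran F \<longleftrightarrow>
     En F \<subseteq> Dom
   \<and> (\<forall>V\<in>En F. PA F V \<subseteq> Dom - {V})
   \<and> (\<forall>V\<in>En F. \<forall>p\<in>PiE (PA F V) Ran. Fn F V p \<in> Ran V)
   \<and> acyclic {(P, V). V \<in> En F \<and> P \<in> PA F V}
   \<and> (\<forall>V. V \<notin> En F \<longrightarrow> PA F V = {} \<and> Fn F V = undefined)
   \<and> (\<forall>V\<in>En F. \<forall>p. p \<notin> PiE (PA F V) Ran \<longrightarrow> Fn F V p = undefined)"

definition compatible :: "('v, 'a) sys \<Rightarrow> ('v \<Rightarrow> 'a) \<Rightarrow> bool" where
  "compatible F s \<longleftrightarrow> (\<forall>V\<in>En F. s V = Fn F V (restrict s (PA F V)))"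

text \<open>An antecedent X1=x1 and ... and Xn=xn is a list of pairs.\<close>

definition consistent :: "('v \<times> 'a) list \<Rightarrow> bool" where
  "consistent xs \<longleftrightarrow> (\<forall>(X, x)\<in>set xs. \<forall>(Y, y)\<in>set xs. X = Y \<longrightarrow> x = y)"

definition ivars :: "('v \<times> 'a) list \<Rightarrow> 'v set" where
  "ivars xs = fst ` set xs"

definition interv_asg :: "'v set \<Rightarrow> ('v \<Rightarrow> 'a set) \<Rightarrow> ('v, 'a) sys \<Rightarrow> ('v \<times> 'a) list
    \<Rightarrow> ('v \<Rightarrow> 'a) \<Rightarrow> ('v \<Rightarrow> 'a)" where
  "interv_asg Dom Ran F xs s = (THE t. t \<in> PiE Dom Ran
      \<and> (\<forall>(X, x)\<in>set xs. t X = x)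
      \<and> (\<forall>V\<in>Dom - En F - ivars xs. t V = s V)
      \<and> (\<forall>V\<in>En F - ivars xs. t V = Fn F V (restrict t (PA F V))))"

definition interv_sys :: "('v, 'a) sys \<Rightarrow> ('v \<times> 'a) list \<Rightarrow> ('v, 'a) sys" where
  "interv_sys F xs =
     \<lparr> En = En F - ivars xs,
       PA = (\<lambda>V. if V \<in> En F - ivars xs then PA F V else {}),
       Fn = (\<lambda>V. if V \<in> En F - ivars xs then Fn F V else undefined) \<rparr>"

datatype ('v, 'a) fm =
    Eq 'v 'a
  | Neg "('v, 'a) fm"
  | Conj "('v, 'a) fm" "('v, 'a) fm"
  | Disj "('v, 'a) fm" "('v, 'a) fm"
  | Cf "('v \<times> 'a) list" "('v, 'a) fm"

definition Imp :: "('v, 'a) fm \<Rightarrow> ('v, 'a) fm \<Rightarrow> ('v, 'a) fm" where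
  "Imp a b = Disj (Neg a) b"

definition Bot :: "'v set \<Rightarrow> ('v \<Rightarrow> 'a set) \<Rightarrow> ('v, 'a) fm" where
  "Bot Dom Ran = (let X = (SOME X. X \<in> Dom); x = (SOME x. x \<in> Ran X)
                  in Conj (Eq X x) (Neg (Eq X x)))"

definition Top :: "'v set \<Rightarrow> ('v \<Rightarrow> 'a set) \<Rightarrow> ('v, 'a) fm" where
  "Top Dom Ran = Neg (Bot Dom Ran)"

definition list_of :: "'b set \<Rightarrow> 'b list" where
  "list_of A = (SOME xs. set xs = A \<and> distinct xs)"

fun BigConj :: "'v set \<Rightarrow> ('v \<Rightarrow> 'a set) \<Rightarrow> ('v, 'a) fm list \<Rightarrow> ('v, 'a) fm" where
  "BigConj Dom Ran [] = Top Dom Ran"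
| "BigConj Dom Ran [a] = a"
| "BigConj Dom Ran (a # as) = Conj a (BigConj Dom Ran as)"

fun BigDisj :: "'v set \<Rightarrow> ('v \<Rightarrow> 'a set) \<Rightarrow> ('v, 'a) fm list \<Rightarrow> ('v, 'a) fm" where
  "BigDisj Dom Ran [] = Bot Dom Ran"
| "BigDisj Dom Ran [a] = a"
| "BigDisj Dom Ran (a # as) = Disj a (BigDisj Dom Ran as)"

definition ConjSet :: "'v set \<Rightarrow> ('v \<Rightarrow> 'a set) \<Rightarrow> ('v, 'a) fm set \<Rightarrow> ('v, 'a) fm" where
  "ConjSet Dom Ran A = BigConj Dom Ran (list_of A)"

definition DisjSet :: "'v set \<Rightarrow> ('v \<Rightarrow> 'a set) \<Rightarrow> ('v, 'a) fm set \<Rightarrow> ('v, 'a) fm" where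
  "DisjSet Dom Ran A = BigDisj Dom Ran (list_of A)"

definition ante :: "'v set \<Rightarrow> ('v \<Rightarrow> 'a) \<Rightarrow> ('v \<times> 'a) list" where
  "ante W w = map (\<lambda>X. (X, w X)) (list_of W)"

text \<open>Causal teams: pairs (T-, F); generalized causal teams: sets of pairs (s, F).\<close>

fun sat_c :: "'v set \<Rightarrow> ('v \<Rightarrow> 'a set) \<Rightarrow> ('v \<Rightarrow> 'a) set \<times> ('v, 'a) sys \<Rightarrow> ('v, 'a) fm \<Rightarrow> bool" where
  "sat_c Dom Ran (T, F) (Eq X x) \<longleftrightarrow> (\<forall>s\<in>T. s X = x)"
| "sat_c Dom Ran (T, F) (Neg a) \<longleftrightarrow> (\<forall>s\<in>T. \<not> sat_c Dom Ran ({s}, F) a)"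
| "sat_c Dom Ran (T, F) (Conj a b) \<longleftrightarrow> sat_c Dom Ran (T, F) a \<and> sat_c Dom Ran (T, F) b"
| "sat_c Dom Ran (T, F) (Disj a b) \<longleftrightarrow>
     (\<exists>T1 T2. T1 \<subseteq> T \<and> T2 \<subseteq> T \<and> T1 \<union> T2 = T \<and> sat_c Dom Ran (T1, F) a \<and> sat_c Dom Ran (T2, F) b)"
| "sat_c Dom Ran (T, F) (Cf xs a) \<longleftrightarrow>
     (\<not> consistent xs \<or> sat_c Dom Ran (interv_asg Dom Ran F xs ` T, interv_sys F xs) a)"

definition interv_g :: "'v set \<Rightarrow> ('v \<Rightarrow> 'a set) \<Rightarrow> (('v \<Rightarrow> 'a) \<times> ('v, 'a) sys) set
    \<Rightarrow> ('v \<times> 'a) list \<Rightarrow> (('v \<Rightarrow> 'a) \<times> ('v, 'a) sys) set" where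
  "interv_g Dom Ran T xs = (\<lambda>(s, F). (interv_asg Dom Ran F xs s, interv_sys F xs)) ` T"

fun sat_g :: "'v set \<Rightarrow> ('v \<Rightarrow> 'a set) \<Rightarrow> (('v \<Rightarrow> 'a) \<times> ('v, 'a) sys) set \<Rightarrow> ('v, 'a) fm \<Rightarrow> bool" where
  "sat_g Dom Ran T (Eq X x) \<longleftrightarrow> (\<forall>(s, F)\<in>T. s X = x)"
| "sat_g Dom Ran T (Neg a) \<longleftrightarrow> (\<forall>p\<in>T. \<not> sat_g Dom Ran {p} a)"
| "sat_g Dom Ran T (Conj a b) \<longleftrightarrow> sat_g Dom Ran T a \<and> sat_g Dom Ran T b"
| "sat_g Dom Ran T (Disj a b) \<longleftrightarrow>
     (\<exists>T1 T2. T1 \<union> T2 = T \<and> sat_g Dom Ran T1 a \<and> sat_g Dom Ran T2 b)"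
| "sat_g Dom Ran T (Cf xs a) \<longleftrightarrow>
     (\<not> consistent xs \<or> sat_g Dom Ran (interv_g Dom Ran T xs) a)"

definition cteam :: "'v set \<Rightarrow> ('v \<Rightarrow> 'a set) \<Rightarrow> ('v \<Rightarrow> 'a) set \<times> ('v, 'a) sys \<Rightarrow> bool" where
  "cteam Dom Ran T \<longleftrightarrow> wf_sys Dom Ran (snd T) \<and>
     (\<forall>s\<in>fst T. s \<in> PiE Dom Ran \<and> compatible (snd T) s)"

definition gteam :: "'v set \<Rightarrow> ('v \<Rightarrow> 'a set) \<Rightarrow> (('v \<Rightarrow> 'a) \<times> ('v, 'a) sys) set \<Rightarrow> bool" where
  "gteam Dom Ran T \<longleftrightarrow> (\<forall>(s, F)\<in>T. wf_sys Dom Ran F \<and> s \<in> PiE Dom Ran \<and> compatible F s)"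

definition tminus :: "(('v \<Rightarrow> 'a) \<times> ('v, 'a) sys) set \<Rightarrow> ('v \<Rightarrow> 'a) set" where
  "tminus T = fst ` T"

definition Cn :: "('v \<Rightarrow> 'a set) \<Rightarrow> ('v, 'a) sys \<Rightarrow> 'v set" where
  "Cn Ran F = {V \<in> En F. \<exists>c. \<forall>p\<in>PiE (PA F V) Ran. Fn F V p = c}"

definition sim_fun :: "('v \<Rightarrow> 'a set) \<Rightarrow> ('v, 'a) sys \<Rightarrow> ('v, 'a) sys \<Rightarrow> 'v \<Rightarrow> bool" where
  "sim_fun Ran F G V \<longleftrightarrow>
     (\<forall>p\<in>PiE (PA F V) Ran. \<forall>q\<in>PiE (PA G V) Ran.
        (\<forall>X\<in>PA F V \<inter> PA G V. p X = q X) \<longrightarrow> Fn F V p = Fn G V q)"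

definition sim :: "('v \<Rightarrow> 'a set) \<Rightarrow> ('v, 'a) sys \<Rightarrow> ('v, 'a) sys \<Rightarrow> bool" where
  "sim Ran F G \<longleftrightarrow> En F - Cn Ran F = En G - Cn Ran G \<and>
     (\<forall>V\<in>En F - Cn Ran F. sim_fun Ran F G V)"

text \<open>Causal teams (the empty causal teams are all identified).\<close>
definition approx_c :: "('v \<Rightarrow> 'a set) \<Rightarrow> ('v \<Rightarrow> 'a) set \<times> ('v, 'a) sys
    \<Rightarrow> ('v \<Rightarrow> 'a) set \<times> ('v, 'a) sys \<Rightarrow> bool" where
  "approx_c Ran T S \<longleftrightarrow> fst T \<noteq> {} \<and> fst S \<noteq> {} \<and> fst T = fst S \<and> sim Ran (snd T) (snd S)"

definition preceq_c :: "('v \<Rightarrow> 'a set) \<Rightarrow> ('v \<Rightarrow> 'a) set \<times> ('v, 'a) sys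
    \<Rightarrow> ('v \<Rightarrow> 'a) set \<times> ('v, 'a) sys \<Rightarrow> bool" where
  "preceq_c Ran S T \<longleftrightarrow> fst S = {} \<or> (\<exists>R. R \<subseteq> fst T \<and> approx_c Ran S (R, snd T))"

definition restr_sim :: "('v \<Rightarrow> 'a set) \<Rightarrow> (('v \<Rightarrow> 'a) \<times> ('v, 'a) sys) set \<Rightarrow> ('v, 'a) sys
    \<Rightarrow> (('v \<Rightarrow> 'a) \<times> ('v, 'a) sys) set" where
  "restr_sim Ran T F = {(s, G) \<in> T. sim Ran G F}"

definition approx_g :: "'v set \<Rightarrow> ('v \<Rightarrow> 'a set) \<Rightarrow> (('v \<Rightarrow> 'a) \<times> ('v, 'a) sys) set
    \<Rightarrow> (('v \<Rightarrow> 'a) \<times> ('v, 'a) sys) set \<Rightarrow> bool" where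
  "approx_g Dom Ran S T \<longleftrightarrow>
     (\<forall>F. wf_sys Dom Ran F \<longrightarrow> tminus (restr_sim Ran S F) = tminus (restr_sim Ran T F))"

definition uniform :: "('v \<Rightarrow> 'a set) \<Rightarrow> (('v \<Rightarrow> 'a) \<times> ('v, 'a) sys) set \<Rightarrow> bool" where
  "uniform Ran T \<longleftrightarrow> (\<forall>(s, F)\<in>T. \<forall>(t, G)\<in>T. sim Ran F G)"

definition preceq_g :: "'v set \<Rightarrow> ('v \<Rightarrow> 'a set) \<Rightarrow> (('v \<Rightarrow> 'a) \<times> ('v, 'a) sys) set
    \<Rightarrow> (('v \<Rightarrow> 'a) \<times> ('v, 'a) sys) set \<Rightarrow> bool" where
  "preceq_g Dom Ran S T \<longleftrightarrow> S = {} \<or> (\<exists>R. R \<subseteq> T \<and> approx_g Dom Ran S R)"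

definition Theta :: "'v set \<Rightarrow> ('v \<Rightarrow> 'a set) \<Rightarrow> ('v \<Rightarrow> 'a) set \<Rightarrow> ('v, 'a) fm" where
  "Theta Dom Ran T = DisjSet Dom Ran
     ((\<lambda>s. ConjSet Dom Ran ((\<lambda>V. Eq V (s V)) ` Dom)) ` T)"

definition eta :: "'v set \<Rightarrow> ('v \<Rightarrow> 'a set) \<Rightarrow> ('v, 'a) sys \<Rightarrow> 'v \<Rightarrow> ('v, 'a) fm" where
  "eta Dom Ran F V = ConjSet Dom Ran
     {Cf (ante (Dom - (PA F V \<union> {V})) w @ ante (PA F V) p) (Eq V (Fn F V p)) | w p.
        w \<in> PiE (Dom - (PA F V \<union> {V})) Ran \<and> p \<in> PiE (PA F V) Ran}"

definition xi :: "'v set \<Rightarrow> ('v \<Rightarrow> 'a set) \<Rightarrow> 'v \<Rightarrow> ('v, 'a) fm" where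
  "xi Dom Ran V = ConjSet Dom Ran
     {Imp (Eq V v) (Cf (ante (Dom - {V}) w) (Eq V v)) | v w.
        v \<in> Ran V \<and> w \<in> PiE (Dom - {V}) Ran}"

definition Phi :: "'v set \<Rightarrow> ('v \<Rightarrow> 'a set) \<Rightarrow> ('v, 'a) sys \<Rightarrow> ('v, 'a) fm" where
  "Phi Dom Ran F = Conj
     (ConjSet Dom Ran (eta Dom Ran F ` (En F - Cn Ran F)))
     (ConjSet Dom Ran (xi Dom Ran ` (Dom - (En F - Cn Ran F))))"

end

theory Submission
  imports Defs
begin

text \<open>Every formula of CO is flat under generalized team semantics, so \<open>\<Theta>\<^sup>T\<^sup>- \<and> \<Phi>\<^sup>F\<close> may be
  evaluated at single pairs \<open>(s, G)\<close>, where \<open>\<Theta>\<close> holds iff \<open>s \<in> T\<^sup>-\<close>. Intervening on all variables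
  except \<open>V\<close> with values \<open>u\<close> sets \<open>V\<close> to \<open>G\<^sub>V(u)\<close> if \<open>V\<close> is endogenous in \<open>G\<close> and leaves it at
  \<open>s(V)\<close> otherwise; \<open>\<eta>(V)\<close> demands this value to be \<open>F\<^sub>V(u)\<close> for all \<open>u\<close>, \<open>\<xi>(V)\<close> demands it to
  be \<open>s(V)\<close>. Ranging over all \<open>u\<close> this pins down the non-constant endogenous variables of \<open>G\<close>
  and their functions, so \<open>\<Phi>\<^sup>F\<close> holds at \<open>(s, G)\<close> iff \<open>G \<sim> F\<close>. As \<open>\<sim>\<close> is an equivalence,
  restricting a team of systems similar to \<open>F\<close> to the class of any \<open>F'\<close> keeps all of it or
  nothing, so \<open>S \<preceq> T\<close> reduces to the same pointwise condition.\<close>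

section \<open>Flatness of generalized team semantics\<close>

lemma list_of_set: "finite A \<Longrightarrow> set (list_of A) = A"
  unfolding list_of_def by (metis (mono_tags, lifting) finite_distinct_list someI_ex)

lemma set_ante: "finite W \<Longrightarrow> set (ante W w) = (\<lambda>X. (X, w X)) ` W"
  by (simp add: ante_def list_of_set)

lemma consistent_graph: "set xs = (\<lambda>X. (X, u X)) ` A \<Longrightarrow> consistent xs"
  unfolding consistent_def by auto

lemma sat_g_flat: "sat_g Dom Ran S \<phi> \<longleftrightarrow> (\<forall>p\<in>S. sat_g Dom Ran {p} \<phi>)"
proof (induction \<phi> arbitrary: S)
  case (Eq X x)
  show ?case by simp
next
  case (Neg a)
  show ?case by simp
next
  case (Disj a b)
  have disj: "sat_g Dom Ran S (Disj a b) \<longleftrightarrow> (\<forall>p\<in>S. sat_g Dom Ran {p} a \<or> sat_g Dom Ran {p} b)" for S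
  proof
    assume "sat_g Dom Ran S (Disj a b)"
    then obtain T1 T2 where "T1 \<union> T2 = S" "sat_g Dom Ran T1 a" "sat_g Dom Ran T2 b"
      by auto
    then show "\<forall>p\<in>S. sat_g Dom Ran {p} a \<or> sat_g Dom Ran {p} b"
      using Disj.IH by blast
  next
    assume "\<forall>p\<in>S. sat_g Dom Ran {p} a \<or> sat_g Dom Ran {p} b"
    then have "{p\<in>S. sat_g Dom Ran {p} a} \<union> {p\<in>S. sat_g Dom Ran {p} b} = S" by blast
    moreover have "sat_g Dom Ran {p\<in>S. sat_g Dom Ran {p} a} a" "sat_g Dom Ran {p\<in>S. sat_g Dom Ran {p} b} b"
      using Disj.IH by blast+
    ultimately show "sat_g Dom Ran S (Disj a b)" by (simp only: sat_g.simps) blast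
  qed
  show ?case unfolding disj[of S] disj[of "{_}"] by blast
next
  case (Conj a b)
  show ?case unfolding sat_g.simps(3) Conj.IH[of S] by blast
next
  case (Cf xs a)
  let ?f = "\<lambda>(s, G). (interv_asg Dom Ran G xs s, interv_sys G xs)"
  have "interv_g Dom Ran T xs = ?f ` T" for T
    by (simp add: interv_g_def)
  then show ?case
    unfolding sat_g.simps(5) Cf.IH[of "interv_g Dom Ran _ xs"] by auto
qed

lemma sat_g_empty [simp]: "sat_g Dom Ran {} \<phi>"
  by (simp add: sat_g_flat[of _ _ "{}"])

lemma sat_g_singleton_Disj [simp]:
  "sat_g Dom Ran {p} (Disj a b) \<longleftrightarrow> sat_g Dom Ran {p} a \<or> sat_g Dom Ran {p} b"
proof
  assume "sat_g Dom Ran {p} (Disj a b)"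
  then obtain T1 T2 where "p \<in> T1 \<or> p \<in> T2" "sat_g Dom Ran T1 a" "sat_g Dom Ran T2 b"
    by auto
  then show "sat_g Dom Ran {p} a \<or> sat_g Dom Ran {p} b"
    using sat_g_flat[of Dom Ran T1 a] sat_g_flat[of Dom Ran T2 b] by blast
next
  assume "sat_g Dom Ran {p} a \<or> sat_g Dom Ran {p} b"
  then show "sat_g Dom Ran {p} (Disj a b)"
    by (metis sat_g.simps(4) sat_g_empty sup_bot.left_neutral sup_bot.right_neutral)
qed

lemma sat_g_singleton_Imp:
  "sat_g Dom Ran {p} (Imp a b) \<longleftrightarrow> (sat_g Dom Ran {p} a \<longrightarrow> sat_g Dom Ran {p} b)"
  by (simp add: Imp_def del: sat_g.simps(4))

lemma sat_g_Bot [simp]: "sat_g Dom Ran S (Bot Dom Ran) \<longleftrightarrow> S = {}"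
  by (auto simp: Bot_def Let_def)

lemma sat_g_Top [simp]: "sat_g Dom Ran S (Top Dom Ran)"
  by (simp add: Top_def)

lemma sat_g_BigConj: "sat_g Dom Ran S (BigConj Dom Ran fs) \<longleftrightarrow> (\<forall>f\<in>set fs. sat_g Dom Ran S f)"
  by (induction Dom Ran fs rule: BigConj.induct) simp_all

lemma sat_g_singleton_BigDisj:
  "sat_g Dom Ran {p} (BigDisj Dom Ran fs) \<longleftrightarrow> (\<exists>f\<in>set fs. sat_g Dom Ran {p} f)"
  by (induction Dom Ran fs rule: BigDisj.induct) (simp_all del: sat_g.simps(4))

lemma sat_g_ConjSet:
  "finite A \<Longrightarrow> sat_g Dom Ran S (ConjSet Dom Ran A) \<longleftrightarrow> (\<forall>a\<in>A. sat_g Dom Ran S a)"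
  by (simp add: ConjSet_def sat_g_BigConj list_of_set)

lemma sat_g_singleton_DisjSet:
  "finite A \<Longrightarrow> sat_g Dom Ran {p} (DisjSet Dom Ran A) \<longleftrightarrow> (\<exists>a\<in>A. sat_g Dom Ran {p} a)"
  by (simp add: DisjSet_def sat_g_singleton_BigDisj list_of_set)

lemma sat_c_iff_sat_g: "sat_c Dom Ran (T, F) \<phi> \<longleftrightarrow> sat_g Dom Ran ((\<lambda>s. (s, F)) ` T) \<phi>"
proof (induction \<phi> arbitrary: T F)
  case (Disj a b)
  show ?case
  proof
    assume "sat_c Dom Ran (T, F) (Disj a b)"
    then obtain T1 T2 where "T1 \<union> T2 = T" "sat_c Dom Ran (T1, F) a" "sat_c Dom Ran (T2, F) b"
      by auto
    moreover have "(\<lambda>s. (s, F)) ` T1 \<union> (\<lambda>s. (s, F)) ` T2 = (\<lambda>s. (s, F)) ` T"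
      using \<open>T1 \<union> T2 = T\<close> by blast
    ultimately show "sat_g Dom Ran ((\<lambda>s. (s, F)) ` T) (Disj a b)"
      using Disj.IH by (simp only: sat_g.simps) blast
  next
    assume "sat_g Dom Ran ((\<lambda>s. (s, F)) ` T) (Disj a b)"
    then obtain T1 T2 where U: "T1 \<union> T2 = (\<lambda>s. (s, F)) ` T" "sat_g Dom Ran T1 a" "sat_g Dom Ran T2 b"
      by auto
    have "T1 = (\<lambda>s. (s, F)) ` (fst ` T1)" "T2 = (\<lambda>s. (s, F)) ` (fst ` T2)"
      "fst ` T1 \<union> fst ` T2 = T" using U(1) by force+
    then show "sat_c Dom Ran (T, F) (Disj a b)"
      using U(2,3) Disj.IH by (metis Un_upper1 Un_upper2 sat_c.simps(4))
  qed
next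
  case (Cf xs a)
  have "interv_g Dom Ran ((\<lambda>s. (s, F)) ` T) xs = (\<lambda>s. (s, interv_sys F xs)) ` interv_asg Dom Ran F xs ` T"
    by (auto simp: interv_g_def)
  then show ?case using Cf.IH by simp
qed auto

lemma PiE_glue:
  assumes p: "p \<in> PiE A R" and q: "q \<in> PiE C R" and agree: "\<forall>X\<in>A \<inter> C. p X = q X"
    and "A \<union> C \<subseteq> B" and ne: "\<forall>X\<in>B. R X \<noteq> {}"
  shows "\<exists>u\<in>PiE B R. restrict u A = p \<and> restrict u C = q"
proof
  let ?u = "\<lambda>X. if X \<in> A then p X else if X \<in> C then q X
                else if X \<in> B then SOME x. x \<in> R X else undefined"
  show "?u \<in> PiE B R"
    using assms by (auto simp: PiE_iff extensional_def some_in_eq)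
  show "restrict ?u A = p \<and> restrict ?u C = q"
    using p q agree by (auto simp: PiE_iff extensional_def)
qed

lemma ball_PiE_restrict:
  assumes "P \<subseteq> B" and "\<forall>X\<in>B. R X \<noteq> {}"
  shows "(\<forall>u\<in>PiE B R. Q (restrict u P)) \<longleftrightarrow> (\<forall>p\<in>PiE P R. Q p)"
proof
  assume "\<forall>u\<in>PiE B R. Q (restrict u P)"
  moreover have "\<exists>u\<in>PiE B R. restrict u P = p" if "p \<in> PiE P R" for p
    using PiE_glue[OF that that] assms by blast
  ultimately show "\<forall>p\<in>PiE P R. Q p" by blast
next
  assume "\<forall>p\<in>PiE P R. Q p"
  moreover have "restrict u P \<in> PiE P R" if "u \<in> PiE B R" for u
    using that assms(1) by (auto simp: restrict_PiE_iff)
  ultimately show "\<forall>u\<in>PiE B R. Q (restrict u P)" by blast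
qed

lemma ball_PiE_disjoint_Un:
  assumes "A \<inter> B = {}"
  shows "(\<forall>u\<in>PiE (A \<union> B) R. Q u) \<longleftrightarrow>
    (\<forall>a\<in>PiE A R. \<forall>b\<in>PiE B R. Q (\<lambda>X. if X \<in> B then b X else a X))"
proof
  assume "\<forall>u\<in>PiE (A \<union> B) R. Q u"
  moreover have "(\<lambda>X. if X \<in> B then b X else a X) \<in> PiE (A \<union> B) R"
    if "a \<in> PiE A R" "b \<in> PiE B R" for a b
    using that by (auto simp: PiE_iff extensional_def)
  ultimately show "\<forall>a\<in>PiE A R. \<forall>b\<in>PiE B R. Q (\<lambda>X. if X \<in> B then b X else a X)"
    by blast
next
  assume merged: "\<forall>a\<in>PiE A R. \<forall>b\<in>PiE B R. Q (\<lambda>X. if X \<in> B then b X else a X)"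
  show "\<forall>u\<in>PiE (A \<union> B) R. Q u"
  proof
    fix u assume u: "u \<in> PiE (A \<union> B) R"
    then have "(\<lambda>X. if X \<in> B then restrict u B X else restrict u A X) = u"
      by (auto simp: PiE_iff extensional_def fun_eq_iff)
    moreover have "restrict u A \<in> PiE A R" "restrict u B \<in> PiE B R"
      using u by (auto simp: restrict_PiE_iff)
    ultimately show "Q u"
      using merged by metis
  qed
qed

section \<open>Similarity of systems of functions\<close>

lemma wf_sys_PA_subset: "wf_sys Dom Ran F \<Longrightarrow> V \<in> En F \<Longrightarrow> PA F V \<subseteq> Dom - {V}"
  by (simp add: wf_sys_def)

lemma wf_sys_En_subset: "wf_sys Dom Ran F \<Longrightarrow> En F \<subseteq> Dom"
  by (simp add: wf_sys_def)

lemma sim_fun_iff_agree_on_PiE: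
  assumes "PA F V \<subseteq> B" and "PA G V \<subseteq> B" and "\<forall>X\<in>B. Ran X \<noteq> {}"
  shows "sim_fun Ran F G V \<longleftrightarrow>
    (\<forall>u\<in>PiE B Ran. Fn F V (restrict u (PA F V)) = Fn G V (restrict u (PA G V)))"
  unfolding sim_fun_def
proof (intro iffI ballI impI)
  fix u assume "\<forall>p\<in>PiE (PA F V) Ran. \<forall>q\<in>PiE (PA G V) Ran.
      (\<forall>X\<in>PA F V \<inter> PA G V. p X = q X) \<longrightarrow> Fn F V p = Fn G V q" and "u \<in> PiE B Ran"
  moreover have "restrict u (PA F V) \<in> PiE (PA F V) Ran" "restrict u (PA G V) \<in> PiE (PA G V) Ran"
    using \<open>u \<in> PiE B Ran\<close> assms(1,2) by (auto simp: restrict_PiE_iff)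
  ultimately show "Fn F V (restrict u (PA F V)) = Fn G V (restrict u (PA G V))"
    by simp
next
  fix p q assume "\<forall>u\<in>PiE B Ran. Fn F V (restrict u (PA F V)) = Fn G V (restrict u (PA G V))"
    and "p \<in> PiE (PA F V) Ran" "q \<in> PiE (PA G V) Ran" "\<forall>X\<in>PA F V \<inter> PA G V. p X = q X"
  then show "Fn F V p = Fn G V q"
    using PiE_glue[of p "PA F V" Ran q "PA G V" B] assms by auto
qed

lemma sim_refl: "sim Ran F F"
  unfolding sim_def sim_fun_def by (metis IntI PiE_ext)

lemma sim_sym: "sim Ran F G \<Longrightarrow> sim Ran G F"
  unfolding sim_def sim_fun_def by (metis Int_commute)

lemma sim_trans:
  assumes sig: "wf_sig Dom Ran"
    and wf: "wf_sys Dom Ran F" "wf_sys Dom Ran G" "wf_sys Dom Ran H"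
    and FG: "sim Ran F G" and GH: "sim Ran G H"
  shows "sim Ran F H"
  unfolding sim_def
proof (intro conjI ballI)
  have EC: "En F - Cn Ran F = En G - Cn Ran G" "En G - Cn Ran G = En H - Cn Ran H"
    using FG GH unfolding sim_def by simp_all
  then show "En F - Cn Ran F = En H - Cn Ran H"
    by simp
  have ne: "\<forall>X\<in>Dom. Ran X \<noteq> {}"
    using sig by (simp add: wf_sig_def)
  have agree_iff: "sim_fun Ran K L V \<longleftrightarrow>
      (\<forall>u\<in>PiE Dom Ran. Fn K V (restrict u (PA K V)) = Fn L V (restrict u (PA L V)))"
    if "wf_sys Dom Ran K" "wf_sys Dom Ran L" "V \<in> En K" "V \<in> En L" for K L V
  proof (rule sim_fun_iff_agree_on_PiE[OF _ _ ne])
    show "PA K V \<subseteq> Dom" "PA L V \<subseteq> Dom"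
      using wf_sys_PA_subset[OF that(1,3)] wf_sys_PA_subset[OF that(2,4)] by blast+
  qed
  fix V assume V: "V \<in> En F - Cn Ran F"
  with EC have En: "V \<in> En F" "V \<in> En G" "V \<in> En H"
    by auto
  have "sim_fun Ran F G V" "sim_fun Ran G H V"
    using FG GH V EC(1) unfolding sim_def by blast+
  then show "sim_fun Ran F H V"
    unfolding agree_iff[OF wf(1,2) En(1,2)] agree_iff[OF wf(2,3) En(2,3)] agree_iff[OF wf(1,3) En(1,3)]
    by simp
qed

lemma restr_sim_eq_self_iff: "restr_sim Ran T F = T \<longleftrightarrow> (\<forall>(t, H)\<in>T. sim Ran H F)"
  unfolding restr_sim_def by auto

lemma restr_sim_of_sim_class:
  assumes sig: "wf_sig Dom Ran" and F: "wf_sys Dom Ran F" and F': "wf_sys Dom Ran F'"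
    and R: "\<forall>(t, H)\<in>R. wf_sys Dom Ran H \<and> sim Ran H F"
  shows "restr_sim Ran R F' = (if sim Ran F F' then R else {})"
proof -
  have "sim Ran H F' \<longleftrightarrow> sim Ran F F'" if "(t, H) \<in> R" for t H
    using R that sim_trans[OF sig _ F F'] sim_trans[OF sig F _ F'] sim_sym by blast
  then show ?thesis
    unfolding restr_sim_def by auto
qed

section \<open>Intervening on all variables but one\<close>

definition cf_value :: "('v, 'a) sys \<Rightarrow> ('v \<Rightarrow> 'a) \<Rightarrow> ('v \<Rightarrow> 'a) \<Rightarrow> 'v \<Rightarrow> 'a" where
  "cf_value G s u V = (if V \<in> En G then Fn G V (restrict u (PA G V)) else s V)"

lemma interv_asg_all_but:
  assumes G: "wf_sys Dom Ran G" and V: "V \<in> Dom" and u: "u \<in> PiE (Dom - {V}) Ran"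
    and xs: "set xs = (\<lambda>X. (X, u X)) ` (Dom - {V})" and s: "s \<in> PiE Dom Ran"
  shows "interv_asg Dom Ran G xs s = u(V := cf_value G s u V)"
proof -
  let ?t = "u(V := cf_value G s u V)"
  have ivars: "ivars xs = Dom - {V}"
    using xs unfolding ivars_def by force
  have parents: "restrict t (PA G V) = restrict u (PA G V)"
    if "V \<in> En G" "\<forall>X\<in>Dom - {V}. t X = u X" for t
    using that wf_sys_PA_subset[OF G, of V] by (auto simp: fun_eq_iff)
  have "cf_value G s u V \<in> Ran V"
  proof (cases "V \<in> En G")
    case True
    with u have "restrict u (PA G V) \<in> PiE (PA G V) Ran"
      using wf_sys_PA_subset[OF G] by (auto simp: restrict_PiE_iff)
    with True G show ?thesis
      by (simp add: cf_value_def wf_sys_def)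
  qed (use s V in \<open>auto simp: cf_value_def\<close>)
  then have t_PiE: "?t \<in> PiE Dom Ran"
    using u V by (auto simp: PiE_iff extensional_def)
  let ?P = "\<lambda>t. t \<in> PiE Dom Ran
      \<and> (\<forall>(X, x)\<in>set xs. t X = x)
      \<and> (\<forall>W\<in>Dom - En G - ivars xs. t W = s W)
      \<and> (\<forall>W\<in>En G - ivars xs. t W = Fn G W (restrict t (PA G W)))"
  have "?P t \<longleftrightarrow> t = ?t" for t
  proof
    assume t: "?P t"
    then have off_V: "\<forall>X\<in>Dom - {V}. t X = u X"
      using xs by auto
    moreover have "t V = cf_value G s u V"
      using t parents[OF _ off_V] V ivars by (auto simp: cf_value_def)
    ultimately show "t = ?t"
      using t t_PiE by (intro PiE_ext[of t Dom Ran]) auto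
  next
    assume "t = ?t"
    then show "?P t"
      using t_PiE xs ivars parents[of ?t] wf_sys_En_subset[OF G] by (auto simp: cf_value_def)
  qed
  then show ?thesis
    unfolding interv_asg_def by simp
qed

lemma cf_value_eq_Fn_iff:
  assumes sig: "wf_sig Dom Ran" and F: "wf_sys Dom Ran F" and G: "wf_sys Dom Ran G"
    and V: "V \<in> En F - Cn Ran F"
  shows "(\<forall>u\<in>PiE (Dom - {V}) Ran. cf_value G s u V = Fn F V (restrict u (PA F V)))
    \<longleftrightarrow> V \<in> En G - Cn Ran G \<and> sim_fun Ran G F V"
proof -
  have ne: "\<forall>X\<in>Dom - {V}. Ran X \<noteq> {}"
    using sig by (simp add: wf_sig_def)
  have PF: "PA F V \<subseteq> Dom - {V}"
    using V wf_sys_PA_subset[OF F] by blast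
  have F_nonconst: "\<not> (\<forall>u\<in>PiE (Dom - {V}) Ran. Fn F V (restrict u (PA F V)) = c)" for c
    using V ball_PiE_restrict[OF PF ne, of "\<lambda>p. Fn F V p = c"] unfolding Cn_def by simp
  show ?thesis
  proof (cases "V \<in> En G")
    case False
    then show ?thesis
      using F_nonconst[of "s V"] by (auto simp: cf_value_def) metis
  next
    case True
    then have PG: "PA G V \<subseteq> Dom - {V}"
      using wf_sys_PA_subset[OF G] by blast
    have "V \<notin> Cn Ran G"
      if agree: "\<forall>u\<in>PiE (Dom - {V}) Ran. Fn G V (restrict u (PA G V)) = Fn F V (restrict u (PA F V))"
    proof
      assume "V \<in> Cn Ran G"
      then obtain c where "\<forall>p\<in>PiE (PA G V) Ran. Fn G V p = c"
        unfolding Cn_def by blast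
      then have "\<forall>u\<in>PiE (Dom - {V}) Ran. Fn G V (restrict u (PA G V)) = c"
        using ball_PiE_restrict[OF PG ne, of "\<lambda>p. Fn G V p = c"] by simp
      with agree F_nonconst[of c] show False
        by simp
    qed
    then show ?thesis
      using True sim_fun_iff_agree_on_PiE[OF PG PF ne] by (auto simp: cf_value_def)
  qed
qed

lemma cf_value_eq_self_iff:
  assumes sig: "wf_sig Dom Ran" and G: "wf_sys Dom Ran G" and V: "V \<in> Dom"
    and s: "s \<in> PiE Dom Ran" and compat: "compatible G s"
  shows "(\<forall>u\<in>PiE (Dom - {V}) Ran. cf_value G s u V = s V) \<longleftrightarrow> V \<notin> En G - Cn Ran G"
proof (cases "V \<in> En G")
  case True
  have ne: "\<forall>X\<in>Dom - {V}. Ran X \<noteq> {}"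
    using sig by (simp add: wf_sig_def)
  have PG: "PA G V \<subseteq> Dom - {V}"
    using True wf_sys_PA_subset[OF G] by blast
  have "(\<forall>u\<in>PiE (Dom - {V}) Ran. cf_value G s u V = s V) \<longleftrightarrow> (\<forall>p\<in>PiE (PA G V) Ran. Fn G V p = s V)"
    using ball_PiE_restrict[OF PG ne] True by (simp add: cf_value_def)
  also have "\<dots> \<longleftrightarrow> V \<in> Cn Ran G"
  proof
    assume "V \<in> Cn Ran G"
    then obtain c where c: "\<forall>p\<in>PiE (PA G V) Ran. Fn G V p = c"
      unfolding Cn_def by blast
    moreover have "s V = Fn G V (restrict s (PA G V))"
      using compat True by (simp add: compatible_def)
    moreover have "restrict s (PA G V) \<in> PiE (PA G V) Ran"
      using s PG by (auto simp: restrict_PiE_iff)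
    ultimately show "\<forall>p\<in>PiE (PA G V) Ran. Fn G V p = s V"
      by simp
  qed (use True in \<open>auto simp: Cn_def\<close>)
  finally show ?thesis
    using True by blast
qed (simp add: cf_value_def)

lemma sim_iff_cf_value:
  assumes sig: "wf_sig Dom Ran" and F: "wf_sys Dom Ran F" and G: "wf_sys Dom Ran G"
    and s: "s \<in> PiE Dom Ran" and compat: "compatible G s"
  shows "sim Ran G F \<longleftrightarrow>
    (\<forall>V\<in>En F - Cn Ran F. \<forall>u\<in>PiE (Dom - {V}) Ran. cf_value G s u V = Fn F V (restrict u (PA F V)))
    \<and> (\<forall>V\<in>Dom - (En F - Cn Ran F). \<forall>u\<in>PiE (Dom - {V}) Ran. cf_value G s u V = s V)"
  (is "_ \<longleftrightarrow> ?rhs")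
proof -
  have "En F \<subseteq> Dom" "En G \<subseteq> Dom"
    using F G by (simp_all add: wf_sys_En_subset)
  then have "sim Ran G F \<longleftrightarrow>
      (\<forall>V\<in>En F - Cn Ran F. V \<in> En G - Cn Ran G \<and> sim_fun Ran G F V)
      \<and> (\<forall>V\<in>Dom - (En F - Cn Ran F). V \<notin> En G - Cn Ran G)"
    unfolding sim_def by blast
  also have "\<dots> \<longleftrightarrow> ?rhs"
  proof (intro conj_cong ball_cong refl)
    fix V assume "V \<in> En F - Cn Ran F"
    then show "V \<in> En G - Cn Ran G \<and> sim_fun Ran G F V
        \<longleftrightarrow> (\<forall>u\<in>PiE (Dom - {V}) Ran. cf_value G s u V = Fn F V (restrict u (PA F V)))"
      using cf_value_eq_Fn_iff[OF sig F G] by blast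
  next
    fix V assume "V \<in> Dom - (En F - Cn Ran F)"
    then show "V \<notin> En G - Cn Ran G \<longleftrightarrow> (\<forall>u\<in>PiE (Dom - {V}) Ran. cf_value G s u V = s V)"
      using cf_value_eq_self_iff[OF sig G _ s compat] by blast
  qed
  finally show ?thesis .
qed

section \<open>The characteristic formulas\<close>

lemma sat_g_Cf_all_but:
  assumes G: "wf_sys Dom Ran G" and s: "s \<in> PiE Dom Ran" and V: "V \<in> Dom"
    and u: "u \<in> PiE (Dom - {V}) Ran" and xs: "set xs = (\<lambda>X. (X, u X)) ` (Dom - {V})"
  shows "sat_g Dom Ran {(s, G)} (Cf xs (Eq V c)) \<longleftrightarrow> cf_value G s u V = c"
  using consistent_graph[OF xs] interv_asg_all_but[OF G V u xs s] by (simp add: interv_g_def)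

lemma sat_g_eta:
  assumes sig: "wf_sig Dom Ran" and F: "wf_sys Dom Ran F" and V: "V \<in> En F"
    and G: "wf_sys Dom Ran G" and s: "s \<in> PiE Dom Ran"
  shows "sat_g Dom Ran {(s, G)} (eta Dom Ran F V) \<longleftrightarrow>
    (\<forall>u\<in>PiE (Dom - {V}) Ran. cf_value G s u V = Fn F V (restrict u (PA F V)))"
proof -
  let ?W = "Dom - (PA F V \<union> {V})" and ?P = "PA F V"
  let ?merge = "\<lambda>w p X. if X \<in> ?P then p X else w X"
  have fin_Dom: "finite Dom" and fin_Ran: "\<forall>X\<in>Dom. finite (Ran X)"
    using sig by (simp_all add: wf_sig_def)
  have VD: "V \<in> Dom" and PF: "?P \<subseteq> Dom - {V}"
    using V wf_sys_En_subset[OF F] wf_sys_PA_subset[OF F] by blast+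
  have fin_P: "finite ?P"
    using fin_Dom by (simp add: finite_subset[OF PF])
  have fin: "finite {Cf (ante ?W w @ ante ?P p) (Eq V (Fn F V p)) | w p.
      w \<in> PiE ?W Ran \<and> p \<in> PiE ?P Ran}"
    by (rule finite_image_set2) (use fin_Dom fin_Ran fin_P PF in \<open>auto intro!: finite_PiE\<close>)
  have conjunct: "sat_g Dom Ran {(s, G)} (Cf (ante ?W w @ ante ?P p) (Eq V (Fn F V p))) \<longleftrightarrow>
      cf_value G s (?merge w p) V = Fn F V (restrict (?merge w p) ?P)"
    if w: "w \<in> PiE ?W Ran" and p: "p \<in> PiE ?P Ran" for w p
  proof -
    have "?merge w p \<in> PiE (Dom - {V}) Ran"
      using w p PF by (auto simp: PiE_iff extensional_def)
    moreover have "set (ante ?W w @ ante ?P p) = (\<lambda>X. (X, ?merge w p X)) ` (Dom - {V})"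
      using fin_Dom fin_P PF by (auto simp: set_ante)
    moreover have "restrict (?merge w p) ?P = p"
      using p by (auto simp: PiE_iff extensional_def fun_eq_iff)
    ultimately show ?thesis
      using sat_g_Cf_all_but[OF G s VD] by simp
  qed
  have "sat_g Dom Ran {(s, G)} (eta Dom Ran F V) \<longleftrightarrow> (\<forall>w\<in>PiE ?W Ran. \<forall>p\<in>PiE ?P Ran.
      sat_g Dom Ran {(s, G)} (Cf (ante ?W w @ ante ?P p) (Eq V (Fn F V p))))"
    unfolding eta_def sat_g_ConjSet[OF fin] by blast
  also have "\<dots> \<longleftrightarrow> (\<forall>w\<in>PiE ?W Ran. \<forall>p\<in>PiE ?P Ran.
      cf_value G s (?merge w p) V = Fn F V (restrict (?merge w p) ?P))"
    using conjunct by simp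
  also have "\<dots> \<longleftrightarrow> (\<forall>u\<in>PiE (?W \<union> ?P) Ran. cf_value G s u V = Fn F V (restrict u ?P))"
    by (rule ball_PiE_disjoint_Un[symmetric]) blast
  also have "?W \<union> ?P = Dom - {V}"
    using PF by blast
  finally show ?thesis .
qed

lemma sat_g_xi:
  assumes sig: "wf_sig Dom Ran" and V: "V \<in> Dom"
    and G: "wf_sys Dom Ran G" and s: "s \<in> PiE Dom Ran"
  shows "sat_g Dom Ran {(s, G)} (xi Dom Ran V) \<longleftrightarrow>
    (\<forall>u\<in>PiE (Dom - {V}) Ran. cf_value G s u V = s V)"
proof -
  have fin_Dom: "finite Dom" and fin_Ran: "\<forall>X\<in>Dom. finite (Ran X)"
    using sig by (simp_all add: wf_sig_def)
  have fin: "finite {Imp (Eq V v) (Cf (ante (Dom - {V}) w) (Eq V v)) | v w.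
      v \<in> Ran V \<and> w \<in> PiE (Dom - {V}) Ran}"
    by (rule finite_image_set2) (use fin_Dom fin_Ran V in \<open>auto intro!: finite_PiE\<close>)
  have "sat_g Dom Ran {(s, G)} (xi Dom Ran V) \<longleftrightarrow> (\<forall>v\<in>Ran V. \<forall>w\<in>PiE (Dom - {V}) Ran.
      sat_g Dom Ran {(s, G)} (Imp (Eq V v) (Cf (ante (Dom - {V}) w) (Eq V v))))"
    unfolding xi_def sat_g_ConjSet[OF fin] by blast
  also have "\<dots> \<longleftrightarrow> (\<forall>v\<in>Ran V. \<forall>w\<in>PiE (Dom - {V}) Ran. s V = v \<longrightarrow> cf_value G s w V = v)"
    using sat_g_Cf_all_but[OF G s V] fin_Dom by (simp add: sat_g_singleton_Imp set_ante)
  also have "\<dots> \<longleftrightarrow> (\<forall>u\<in>PiE (Dom - {V}) Ran. cf_value G s u V = s V)"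
    using s V by (auto simp: PiE_iff)
  finally show ?thesis .
qed

lemma sat_g_Phi:
  assumes sig: "wf_sig Dom Ran" and F: "wf_sys Dom Ran F" and G: "wf_sys Dom Ran G"
    and s: "s \<in> PiE Dom Ran" and compat: "compatible G s"
  shows "sat_g Dom Ran {(s, G)} (Phi Dom Ran F) \<longleftrightarrow> sim Ran G F"
proof -
  have "finite Dom"
    using sig by (simp add: wf_sig_def)
  moreover have "En F - Cn Ran F \<subseteq> Dom"
    using wf_sys_En_subset[OF F] by blast
  ultimately have "finite (eta Dom Ran F ` (En F - Cn Ran F))" "finite (xi Dom Ran ` (Dom - (En F - Cn Ran F)))"
    by (auto intro: finite_subset)
  then show ?thesis
    unfolding Phi_def sat_g.simps(3) sim_iff_cf_value[OF sig F G s compat]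
    using sat_g_eta[OF sig F _ G s] sat_g_xi[OF sig _ G s] by (simp add: sat_g_ConjSet)
qed

lemma sat_g_Theta:
  assumes sig: "wf_sig Dom Ran" and Tm: "Tm \<subseteq> PiE Dom Ran" and s: "s \<in> PiE Dom Ran"
  shows "sat_g Dom Ran {(s, G)} (Theta Dom Ran Tm) \<longleftrightarrow> s \<in> Tm"
proof -
  have fin_Dom: "finite Dom" and fin_Ran: "\<forall>X\<in>Dom. finite (Ran X)"
    using sig by (simp_all add: wf_sig_def)
  then have "finite Tm"
    using finite_subset[OF Tm] by (simp add: finite_PiE)
  then have "sat_g Dom Ran {(s, G)} (Theta Dom Ran Tm) \<longleftrightarrow> (\<exists>t\<in>Tm. \<forall>V\<in>Dom. s V = t V)"
    unfolding Theta_def using fin_Dom by (simp add: sat_g_singleton_DisjSet sat_g_ConjSet)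
  also have "\<dots> \<longleftrightarrow> s \<in> Tm"
    using Tm s by (metis PiE_ext subsetD)
  finally show ?thesis .
qed

lemma sat_g_Theta_Phi:
  assumes sig: "wf_sig Dom Ran" and F: "wf_sys Dom Ran F"
    and S: "gteam Dom Ran S" and Tm: "Tm \<subseteq> PiE Dom Ran"
  shows "sat_g Dom Ran S (Conj (Theta Dom Ran Tm) (Phi Dom Ran F)) \<longleftrightarrow>
    (\<forall>(s, G)\<in>S. s \<in> Tm \<and> sim Ran G F)"
proof -
  have "sat_g Dom Ran {(s, G)} (Theta Dom Ran Tm) \<longleftrightarrow> s \<in> Tm"
    and "sat_g Dom Ran {(s, G)} (Phi Dom Ran F) \<longleftrightarrow> sim Ran G F"
    if "(s, G) \<in> S" for s G
    using S that sat_g_Theta[OF sig Tm] sat_g_Phi[OF sig F] by (auto simp: gteam_def)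
  then show ?thesis
    unfolding sat_g_flat[of _ _ S] by auto
qed

section \<open>Team inclusion\<close>

lemma preceq_g_iff:
  assumes sig: "wf_sig Dom Ran" and F: "wf_sys Dom Ran F" and S: "gteam Dom Ran S"
    and T: "\<forall>(t, H)\<in>T. wf_sys Dom Ran H \<and> sim Ran H F"
  shows "preceq_g Dom Ran S T \<longleftrightarrow> (\<forall>(s, G)\<in>S. s \<in> tminus T \<and> sim Ran G F)"
proof
  assume "preceq_g Dom Ran S T"
  then consider "S = {}" | R where "R \<subseteq> T" "approx_g Dom Ran S R"
    unfolding preceq_g_def by blast
  then show "\<forall>(s, G)\<in>S. s \<in> tminus T \<and> sim Ran G F"
  proof cases
    case 2
    show ?thesis
    proof clarify
      fix s G assume sG: "(s, G) \<in> S"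
      then have G: "wf_sys Dom Ran G"
        using S by (auto simp: gteam_def)
      have "s \<in> tminus (restr_sim Ran S G)"
        using sG sim_refl unfolding restr_sim_def tminus_def by force
      also have "tminus (restr_sim Ran S G) = tminus (restr_sim Ran R G)"
        using 2(2) G unfolding approx_g_def by blast
      also have "restr_sim Ran R G = (if sim Ran F G then R else {})"
        using T 2(1) by (intro restr_sim_of_sim_class[OF sig F G]) blast
      finally have "sim Ran F G" "s \<in> tminus R"
        by (auto split: if_splits simp: tminus_def)
      then show "s \<in> tminus T \<and> sim Ran G F"
        using 2(1) sim_sym unfolding tminus_def by blast
    qed
  qed simp
next
  assume ST: "\<forall>(s, G)\<in>S. s \<in> tminus T \<and> sim Ran G F"
  define R where "R = {(t, H) \<in> T. t \<in> tminus S}"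
  have "tminus R = tminus S"
    using ST unfolding R_def tminus_def by force
  moreover have "\<forall>(s, G)\<in>S. wf_sys Dom Ran G \<and> sim Ran G F"
    using S ST unfolding gteam_def by blast
  moreover have "\<forall>(t, H)\<in>R. wf_sys Dom Ran H \<and> sim Ran H F"
    using T unfolding R_def by blast
  ultimately have "tminus (restr_sim Ran S F') = tminus (restr_sim Ran R F')"
    if "wf_sys Dom Ran F'" for F'
    using restr_sim_of_sim_class[OF sig F that] by simp
  then have "approx_g Dom Ran S R"
    by (simp add: approx_g_def)
  moreover have "R \<subseteq> T"
    unfolding R_def by blast
  ultimately show "preceq_g Dom Ran S T"
    unfolding preceq_g_def by blast
qed

theorem lemma4p8:
  fixes Dom :: "'v set" and Ran :: "'v \<Rightarrow> 'a set" and F :: "('v, 'a) sys"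
  assumes "wf_sig Dom Ran"
    and "wf_sys Dom Ran F"
  shows "(\<forall>S T. gteam Dom Ran S \<and> gteam Dom Ran T \<and> uniform Ran T \<and> T = restr_sim Ran T F \<longrightarrow>
            (sat_g Dom Ran S (Conj (Theta Dom Ran (tminus T)) (Phi Dom Ran F))
             \<longleftrightarrow> preceq_g Dom Ran S T))
       \<and> (\<forall>Sm G Tm. cteam Dom Ran (Sm, G) \<and> cteam Dom Ran (Tm, F) \<longrightarrow>
            (sat_c Dom Ran (Sm, G) (Conj (Theta Dom Ran Tm) (Phi Dom Ran F))
             \<longleftrightarrow> preceq_c Ran (Sm, G) (Tm, F)))"
proof (intro conjI allI impI)
  fix S T
  assume "gteam Dom Ran S \<and> gteam Dom Ran T \<and> uniform Ran T \<and> T = restr_sim Ran T F"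
  then have S: "gteam Dom Ran S" and T: "gteam Dom Ran T" and T_class: "restr_sim Ran T F = T"
    by simp_all
  have "\<forall>(t, H)\<in>T. wf_sys Dom Ran H \<and> sim Ran H F"
    using T T_class unfolding gteam_def restr_sim_eq_self_iff by blast
  moreover have "tminus T \<subseteq> PiE Dom Ran"
    using T unfolding gteam_def tminus_def by fastforce
  ultimately show "sat_g Dom Ran S (Conj (Theta Dom Ran (tminus T)) (Phi Dom Ran F))
      \<longleftrightarrow> preceq_g Dom Ran S T"
    using sat_g_Theta_Phi[OF assms S] preceq_g_iff[OF assms S] by simp
next
  fix Sm G Tm
  assume "cteam Dom Ran (Sm, G) \<and> cteam Dom Ran (Tm, F)"
  then have "gteam Dom Ran ((\<lambda>s. (s, G)) ` Sm)" and "Tm \<subseteq> PiE Dom Ran"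
    unfolding cteam_def gteam_def by auto
  then have "sat_c Dom Ran (Sm, G) (Conj (Theta Dom Ran Tm) (Phi Dom Ran F)) \<longleftrightarrow>
      Sm \<subseteq> Tm \<and> (Sm \<noteq> {} \<longrightarrow> sim Ran G F)"
    unfolding sat_c_iff_sat_g by (subst sat_g_Theta_Phi[OF assms]) auto
  also have "\<dots> \<longleftrightarrow> preceq_c Ran (Sm, G) (Tm, F)"
    unfolding preceq_c_def approx_c_def by auto
  finally show "sat_c Dom Ran (Sm, G) (Conj (Theta Dom Ran Tm) (Phi Dom Ran F)) \<longleftrightarrow> preceq_c Ran (Sm, G) (Tm, F)" .
qed

end
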